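(* Let $b\in(0,1]$ and let $f:[0,1]\to[0,1]$ be $$f(x)=\begin{cases} x, & 0\le x\le \tfrac12,\\ x(1-b+bx), & \tfrac12<x\le 1.\end{cases}$$ Then: (1) The set of fixed points of $f$ is $[0,\tfrac12]\cup\{1\}$. (2) For every $x\in(\tfrac12,1)$ there exists $n\in\mathbb N$ such that $f^n(x)=p$ and $f^{n+1}(x)=f(p)=p$ for some $p\in(\tfrac12-\tfrac b4,\tfrac12]$. (3) For every $x_0\in(\tfrac12-\tfrac b4,\tfrac12]$, the sequence defined recursively by $$x_{n+1}=\frac1b\left(\sqrt{bx_n+\left(\frac{1-b}{2}\right)^2}+\frac{b-1}{2}\right),\qquad n\ge 0,$$ consists of preimages of $x_0$: $f(x_{n+1})=x_n$ for all $n\ge 0$ (so $f^n(x_n)=x_0$), i.e. this recurrence gives the points whose orbits reach $x_0$.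
   Context: $f^n$ denotes the $n$-fold composition of $f$ with itself. This $f$ arises from a population of two species with state $(x,1-x)$, but the claim concerns only the map above. *)

theory Defs
  imports Complex_Main
begin

definition fmap :: "real \<Rightarrow> real \<Rightarrow> real" where
  "fmap b x = (if x \<le> 1/2 then x else x * (1 - b + b * x))"

end

theory Submission
  imports Defs
begin

text \<open>Above \<open>1/2\<close> the map is \<open>f x = x - b x (1 - x)\<close>, so an orbit starting in \<open>(1/2, x\<^sub>0]\<close>
  loses at least \<open>b x\<^sub>0 (1 - x\<^sub>0) > 0\<close> per step as long as it stays above \<open>1/2\<close>; hence it
  crosses \<open>1/2\<close> after finitely many steps and then stays fixed. Since
  \<open>f x - (1/2 - b/4) = (x - 1/2) + b (x - 1/2)\<^sup>2\<close>, the crossing step lands in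
  \<open>(1/2 - b/4, 1/2]\<close>. Conversely, the recurrence picks the root \<open>z > 1/2\<close> of
  \<open>b z\<^sup>2 + (1 - b) z = y\<close>, which lies in \<open>(1/2, 1)\<close> whenever \<open>1/2 - b/4 < y < 1\<close>.\<close>

lemma fmap_below_half: "x \<le> 1/2 \<Longrightarrow> fmap b x = x"
  by (simp add: fmap_def)

lemma fmap_above_half: "1/2 < x \<Longrightarrow> fmap b x = x - b * x * (1 - x)"
  by (simp add: fmap_def algebra_simps)

lemma fmap_fixed_iff:
  assumes "b \<noteq> 0"
  shows "fmap b x = x \<longleftrightarrow> x \<le> 1/2 \<or> x = 1"
proof (cases "x \<le> 1/2")
  case False
  then have "fmap b x = x \<longleftrightarrow> b * x * (1 - x) = 0"
    by (simp add: fmap_above_half)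
  also have "\<dots> \<longleftrightarrow> x = 1"
    using False assms by auto
  finally show ?thesis
    using False by simp
qed (simp add: fmap_below_half)

lemma fmap_above_half_gt:
  assumes "0 \<le> b" "1/2 < x"
  shows "1/2 - b/4 < fmap b x"
proof -
  have "fmap b x - (1/2 - b/4) = (x - 1/2) + b * (x - 1/2)^2"
    using assms(2) by (simp add: fmap_above_half power2_eq_square algebra_simps)
  moreover have "0 \<le> b * (x - 1/2)^2"
    using assms(1) by simp
  ultimately show ?thesis
    using assms(2) by linarith
qed

lemma fmap_above_half_decrease:
  assumes "0 \<le> b" "1/2 < y" "y \<le> x"
  shows "fmap b y \<le> y - b * x * (1 - x)"
proof -
  have "x * (1 - x) \<le> y * (1 - y)"
    using assms(2,3) mult_nonneg_nonneg[of "x - y" "x + y - 1"] by (simp add: algebra_simps)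
  then have "b * (x * (1 - x)) \<le> b * (y * (1 - y))"
    using assms(1) by (rule mult_left_mono)
  then show ?thesis
    using assms(2) by (simp add: fmap_above_half algebra_simps)
qed

lemma fmap_orbit_crosses_half:
  assumes "0 \<le> b" "x \<le> 1" "1/2 < y" "y \<le> x" "y - 1/2 \<le> real k * (b * x * (1 - x))"
  shows "\<exists>n. (fmap b ^^ n) y \<in> {1/2 - b/4<..1/2}"
  using assms(3-5)
proof (induction k arbitrary: y)
  case 0
  then show ?case by simp
next
  case (Suc k)
  have step: "fmap b y \<le> y - b * x * (1 - x)"
    using fmap_above_half_decrease[OF assms(1) Suc.prems(1,2)] .
  show ?case
  proof (cases "fmap b y \<le> 1/2")
    case True
    then have "(fmap b ^^ 1) y \<in> {1/2 - b/4<..1/2}"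
      using fmap_above_half_gt[OF assms(1) Suc.prems(1)] by simp
    then show ?thesis ..
  next
    case False
    have "0 \<le> b * x * (1 - x)"
      using assms(1,2) Suc.prems(1,2) by simp
    then have "fmap b y \<le> x" "fmap b y - 1/2 \<le> real k * (b * x * (1 - x))"
      using step Suc.prems(2,3) by (simp_all add: algebra_simps)
    then obtain n where "(fmap b ^^ n) (fmap b y) \<in> {1/2 - b/4<..1/2}"
      using Suc.IH False by force
    then have "(fmap b ^^ Suc n) y \<in> {1/2 - b/4<..1/2}"
      by (simp only: funpow_Suc_right comp_def)
    then show ?thesis ..
  qed
qed

lemma fmap_eventually_fixed:
  assumes "0 < b" "x \<in> {1/2<..<1}"
  shows "\<exists>n. \<exists>p \<in> {1/2 - b/4<..1/2}.
    (fmap b ^^ n) x = p \<and> (fmap b ^^ Suc n) x = p \<and> fmap b p = p"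
proof -
  have "0 < b * x * (1 - x)"
    using assms by simp
  then obtain k :: nat where "x - 1/2 < real k * (b * x * (1 - x))"
    using ex_less_of_nat_mult by blast
  then obtain n where p: "(fmap b ^^ n) x \<in> {1/2 - b/4<..1/2}"
    using fmap_orbit_crosses_half[of b x x k] assms by force
  then have "fmap b ((fmap b ^^ n) x) = (fmap b ^^ n) x"
    by (simp add: fmap_below_half)
  then show ?thesis
    using p by auto
qed

definition fmap_upper_inv :: "real \<Rightarrow> real \<Rightarrow> real" where
  "fmap_upper_inv b y = (1/b) * (sqrt (b * y + ((1 - b)/2)^2) + (b - 1)/2)"

lemma fmap_upper_inv:
  assumes "0 < b" "1/2 - b/4 < y"
  shows "1/2 < fmap_upper_inv b y" and "fmap b (fmap_upper_inv b y) = y"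
proof -
  define c where "c = (1 - b)/2"
  define s where "s = sqrt (b * y + c^2)"
  have z: "fmap_upper_inv b y = (s - c) / b"
    unfolding fmap_upper_inv_def s_def c_def by (simp add: field_simps)
  have "c^2 = 1/4 - b/2 + b * b/4"
    unfolding c_def by (simp add: power2_eq_square field_simps)
  then have rad: "(1/2)^2 < b * y + c^2"
    using mult_strict_left_mono[OF assms(2,1)] by (simp add: power2_eq_square algebra_simps)
  then have s_gt: "1/2 < s"
    unfolding s_def by (rule real_less_rsqrt)
  have s_sq: "s^2 = b * y + c^2"
    using rad unfolding s_def by (simp add: power2_eq_square)
  show gt: "1/2 < fmap_upper_inv b y"
    using s_gt assms(1) unfolding z c_def by (simp add: field_simps)
  have "fmap b ((s - c) / b) = (s - c) * (s + c) / b"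
    using gt assms(1) unfolding z c_def by (simp add: fmap_def field_simps)
  also have "\<dots> = y"
    using s_sq assms(1) by (simp add: power2_eq_square algebra_simps)
  finally show "fmap b (fmap_upper_inv b y) = y"
    unfolding z .
qed

lemma fmap_upper_inv_less_one:
  assumes "0 < b" "y < 1"
  shows "fmap_upper_inv b y < 1"
proof -
  have "((1 - b)/2)^2 = 1/4 - b/2 + b * b/4" "((1 + b)/2)^2 = 1/4 + b/2 + b * b/4"
    by (simp_all add: power2_eq_square field_simps)
  then have "b * y + ((1 - b)/2)^2 < ((1 + b)/2)^2"
    using mult_strict_left_mono[OF assms(2,1)] by simp
  then have "sqrt (b * y + ((1 - b)/2)^2) < (1 + b)/2"
    using assms(1) real_sqrt_less_mono by fastforce
  then show ?thesis
    using assms(1) by (simp add: fmap_upper_inv_def field_simps)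
qed

lemma funpow_backward_orbit:
  assumes "\<And>n. f (xs (Suc n)) = xs n"
  shows "(f ^^ n) (xs n) = xs 0"
proof (induction n)
  case (Suc n)
  then show ?case
    using assms[of n] by (simp add: funpow_Suc_right del: funpow.simps)
qed simp

lemma fmap_preimage_sequence:
  assumes "0 < b" "xs 0 \<in> {1/2 - b/4<..1/2}" "\<And>n. xs (Suc n) = fmap_upper_inv b (xs n)"
  shows "xs n \<in> {1/2 - b/4<..<1}" and "fmap b (xs (Suc n)) = xs n"
proof -
  show in_range: "xs n \<in> {1/2 - b/4<..<1}" for n
  proof (induction n)
    case (Suc n)
    then show ?case
      using fmap_upper_inv(1) fmap_upper_inv_less_one assms by force
  qed (use assms(2) in simp)
  show "fmap b (xs (Suc n)) = xs n"
    using fmap_upper_inv(2)[OF assms(1)] in_range[of n] assms(3) by simp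
qed

theorem proposition3p5:
  fixes b :: real
  assumes b: "0 < b" "b \<le> 1"
  shows "({x \<in> {0..1}. fmap b x = x} = {0..1/2} \<union> {1}) \<and>
         (\<forall>x \<in> {1/2<..<1}. \<exists>n::nat. \<exists>p \<in> {1/2 - b/4<..1/2}.
           (fmap b ^^ n) x = p \<and> (fmap b ^^ (Suc n)) x = p \<and> fmap b p = p) \<and>
         (\<forall>xs :: nat \<Rightarrow> real. xs 0 \<in> {1/2 - b/4<..1/2} \<and>
           (\<forall>n. xs (Suc n) = (1/b) * (sqrt (b * xs n + ((1 - b)/2)^2) + (b - 1)/2))
           \<longrightarrow> (\<forall>n. xs n \<in> {0..1} \<and> fmap b (xs (Suc n)) = xs n \<and> (fmap b ^^ n) (xs n) = xs 0))"
proof (intro conjI allI ballI impI)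
  show "{x \<in> {0..1}. fmap b x = x} = {0..1/2} \<union> {1}"
    using b(1) by (auto simp: fmap_fixed_iff)
next
  show "\<exists>n. \<exists>p \<in> {1/2 - b/4<..1/2}. (fmap b ^^ n) x = p \<and> (fmap b ^^ Suc n) x = p \<and> fmap b p = p"
    if "x \<in> {1/2<..<1}" for x
    using fmap_eventually_fixed[OF b(1) that] .
next
  fix xs :: "nat \<Rightarrow> real" and n
  assume "xs 0 \<in> {1/2 - b/4<..1/2} \<and>
    (\<forall>n. xs (Suc n) = (1/b) * (sqrt (b * xs n + ((1 - b)/2)^2) + (b - 1)/2))"
  then have xs0: "xs 0 \<in> {1/2 - b/4<..1/2}" and rec: "\<And>n. xs (Suc n) = fmap_upper_inv b (xs n)"
    by (auto simp: fmap_upper_inv_def)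
  note preimage = fmap_preimage_sequence[where xs = xs, OF b(1) xs0 rec]
  show "xs n \<in> {0..1}"
    using preimage(1)[of n] b by auto
  show "fmap b (xs (Suc n)) = xs n"
    by (rule preimage(2))
  show "(fmap b ^^ n) (xs n) = xs 0"
    by (rule funpow_backward_orbit) (rule preimage(2))
qed

end
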